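(* Let $X$ be a locally compact space, $Y$ a locally Hausdorff space and $p:X\to Y$ a continuous map all of whose leaves are Hausdorff. Let $L$ be a compact leaf of $p$ which is open in the fiber $p^{-1}(p(L))$. Then for every open neighbourhood $V$ of $L$ in $X$ there exists an open neighbourhood $U\subset V$ of $L$ which is a union of compact leaves of $p$.
   Context: For a continuous map $p:X\to Y$, a leaf of $p$ is a connected component of a fiber $p^{-1}(y)$, $y\in Y$, equipped with the subspace topology from $X$. *)

theory Defs
  imports "HOL-Analysis.Analysis"
begin

definition fiber_of :: "'a topology \<Rightarrow> ('a \<Rightarrow> 'b) \<Rightarrow> 'b \<Rightarrow> 'a set" where
  "fiber_of X p y = {x \<in> topspace X. p x = y}"

definition leaf_of :: "'a topology \<Rightarrow> ('a \<Rightarrow> 'b) \<Rightarrow> 'a set \<Rightarrow> bool" where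
  "leaf_of X p L \<longleftrightarrow>
     (\<exists>x \<in> topspace X. L = connected_component_of_set (subtopology X (fiber_of X p (p x))) x)"

definition locally_Hausdorff_space :: "'a topology \<Rightarrow> bool" where
  "locally_Hausdorff_space Y \<longleftrightarrow>
     (\<forall>y \<in> topspace Y. \<exists>W. openin Y W \<and> y \<in> W \<and> Hausdorff_space (subtopology Y W))"

end

theory Submission
  imports Defs
begin

text \<open>Since L is open in its fibre, V can be shrunk to an open A that meets this fibre only in L
  and lies over a Hausdorff open W. Local compactness gives Q open and K compact with
  L \<subseteq> Q \<subseteq> K \<subseteq> A. The image of the compact collar K - Q is closed in W and misses p(L), so
  U = {x \<in> Q. p x \<in> W - p ` (K - Q)} is an open neighbourhood of L. A leaf C through a point of U
  lies over a point outside p ` (K - Q), hence C \<inter> K = C \<inter> Q. This set is compact (C is closed in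
  its fibre, and the fibre meets K in a compact set), hence closed in the Hausdorff leaf C; it is
  also open in C, so the connected C lies in Q, is compact, and lies in U.\<close>

lemma neighbourhood_base_compactin_sandwich:
  assumes "neighbourhood_base_of (compactin X) X" and "compactin X L"
    and "openin X A" and "L \<subseteq> A"
  obtains Q K where "openin X Q" "compactin X K" "L \<subseteq> Q" "Q \<subseteq> K" "K \<subseteq> A"
proof -
  have "\<forall>x\<in>L. \<exists>Q K. openin X Q \<and> compactin X K \<and> x \<in> Q \<and> Q \<subseteq> K \<and> K \<subseteq> A"
    using assms unfolding neighbourhood_base_of by (metis subsetD)
  then obtain Qx Kx where QK: "\<And>x. x \<in> L \<Longrightarrow>
      openin X (Qx x) \<and> compactin X (Kx x) \<and> x \<in> Qx x \<and> Qx x \<subseteq> Kx x \<and> Kx x \<subseteq> A"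
    by metis
  have "\<forall>Q \<in> Qx ` L. openin X Q" "L \<subseteq> \<Union> (Qx ` L)"
    using QK by auto
  then obtain T where T: "finite T" "T \<subseteq> L" "L \<subseteq> \<Union> (Qx ` T)"
    using \<open>compactin X L\<close> by (metis compactinD finite_subset_image)
  show thesis
  proof
    show "openin X (\<Union> (Qx ` T))"
      using QK T by (intro openin_Union) auto
    show "compactin X (\<Union> (Kx ` T))"
      using QK T by (intro compactin_Union) auto
  qed (use QK T in fastforce)+
qed

lemma connectedin_subset_openin_if_compactin_Int:
  assumes "connectedin X C" and "Hausdorff_space (subtopology X C)"
    and "openin X Q" and "compactin X (C \<inter> Q)" and "x \<in> C" and "x \<in> Q"
  shows "C \<subseteq> Q"
proof -
  have C: "C \<subseteq> topspace X" "connected_space (subtopology X C)"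
    using assms(1) by (simp_all add: connectedin_def)
  have "compactin (subtopology X C) (C \<inter> Q)"
    using assms(4) by (simp add: compactin_subtopology)
  then have "closedin (subtopology X C) (C \<inter> Q)"
    by (rule compactin_imp_closedin[OF assms(2)])
  moreover have "openin (subtopology X C) (C \<inter> Q)"
    using assms(3) by (auto simp: openin_subtopology)
  ultimately have "C \<inter> Q = {} \<or> C \<inter> Q = topspace (subtopology X C)"
    using C(2) connected_space_clopen_in by blast
  then show ?thesis
    using C(1) assms(5,6) by (auto simp: topspace_subtopology_subset)
qed

lemma openin_diff_image_compactin:
  assumes "continuous_map X Y p" and "openin Y W" and "Hausdorff_space (subtopology Y W)"
    and "compactin X B" and "p ` B \<subseteq> W"
  shows "openin Y (W - p ` B)"
proof -
  have "compactin (subtopology Y W) (p ` B)"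
    using image_compactin[OF assms(4,1)] assms(5) by (simp add: compactin_subtopology)
  then have "closedin (subtopology Y W) (p ` B)"
    by (rule compactin_imp_closedin[OF assms(3)])
  then have "openin (subtopology Y W) (W - p ` B)"
    using openin_subset[OF assms(2)] by (simp add: closedin_def inf.absorb2)
  then show ?thesis
    using assms(2) openin_trans_full by blast
qed

lemma fiber_of_subset_topspace: "fiber_of X p y \<subseteq> topspace X"
  by (auto simp: fiber_of_def)

lemma closedin_Int_fiber_of:
  assumes "continuous_map (subtopology X K) Z p" and "t1_space Z"
  shows "closedin (subtopology X K) (K \<inter> fiber_of X p y)"
proof (cases "y \<in> topspace Z")
  case True
  then have "closedin Z {y}"
    by (rule closedin_t1_singleton[OF assms(2)])
  then have "closedin (subtopology X K) {x \<in> topspace (subtopology X K). p x \<in> {y}}"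
    by (rule closedin_continuous_map_preimage[OF assms(1)])
  moreover have "{x \<in> topspace (subtopology X K). p x \<in> {y}} = K \<inter> fiber_of X p y"
    by (auto simp: fiber_of_def)
  ultimately show ?thesis
    by simp
next
  case False
  then have "K \<inter> fiber_of X p y = {}"
    using continuous_map_image_subset_topspace[OF assms(1)] by (auto simp: fiber_of_def)
  then show ?thesis
    by simp
qed

definition leaf_through :: "'a topology \<Rightarrow> ('a \<Rightarrow> 'b) \<Rightarrow> 'a \<Rightarrow> 'a set" where
  "leaf_through X p x = connected_component_of_set (subtopology X (fiber_of X p (p x))) x"

lemma leaf_of_iff_leaf_through: "leaf_of X p L \<longleftrightarrow> (\<exists>x \<in> topspace X. L = leaf_through X p x)"
  by (simp add: leaf_of_def leaf_through_def)

lemma leaf_through_subset_fiber: "leaf_through X p x \<subseteq> fiber_of X p (p x)"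
  unfolding leaf_through_def
  using connected_component_of_subset_topspace[of "subtopology X (fiber_of X p (p x))" x]
  by (simp add: topspace_subtopology_subset fiber_of_subset_topspace)

lemma leaf_through_imp_eq: "z \<in> leaf_through X p x \<Longrightarrow> p z = p x"
  using leaf_through_subset_fiber by (fastforce simp: fiber_of_def)

lemma mem_leaf_through:
  assumes "x \<in> topspace X"
  shows "x \<in> leaf_through X p x"
proof -
  have "x \<in> topspace (subtopology X (fiber_of X p (p x)))"
    using assms by (simp add: fiber_of_def)
  then show ?thesis
    unfolding leaf_through_def mem_Collect_eq by (rule connected_component_of_refl[THEN iffD2])
qed

lemma connectedin_leaf_through: "connectedin X (leaf_through X p x)"
  unfolding leaf_through_def
  using connectedin_connected_component_of[of "subtopology X (fiber_of X p (p x))" x]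
  by (simp add: connectedin_subtopology)

lemma closedin_fiber_leaf_through:
  "closedin (subtopology X (fiber_of X p (p x))) (leaf_through X p x)"
  unfolding leaf_through_def by (rule closedin_connected_component_of)

lemma compactin_leaf_through_Int:
  assumes "continuous_map (subtopology X K) Z p" and "t1_space Z" and "compactin X K"
  shows "compactin X (leaf_through X p x \<inter> K)"
proof -
  obtain T where T: "closedin X T" "leaf_through X p x = fiber_of X p (p x) \<inter> T"
    using closedin_fiber_leaf_through[of X p x] by (auto simp: closedin_subtopology)
  have "compact_space (subtopology X K)"
    using assms(3) compactin_subspace by blast
  then have "compactin (subtopology X K) (K \<inter> fiber_of X p (p x))"
    using closedin_Int_fiber_of[OF assms(1,2)] by (rule closedin_compact_space)
  then have "compactin X (K \<inter> fiber_of X p (p x))"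
    by (simp add: compactin_subtopology)
  then have "compactin X (T \<inter> (K \<inter> fiber_of X p (p x)))"
    by (rule closed_Int_compactin[OF T(1)])
  then show ?thesis
    using T(2) by (simp add: Int_ac)
qed

lemma leaf_through_subset_and_compactin:
  assumes "continuous_map X Y p" and "Hausdorff_space (subtopology Y W)"
    and "compactin X K" and "p ` K \<subseteq> W" and "openin X Q" and "Q \<subseteq> K"
    and "Hausdorff_space (subtopology X (leaf_through X p x))"
    and "x \<in> Q" and "p x \<notin> p ` (K - Q)"
  shows "leaf_through X p x \<subseteq> Q" and "compactin X (leaf_through X p x)"
proof -
  let ?C = "leaf_through X p x"
  have "p \<in> topspace (subtopology X K) \<rightarrow> W"
    using assms(4) by auto
  then have "continuous_map (subtopology X K) (subtopology Y W) p"
    by (rule continuous_map_into_subtopology[OF continuous_map_from_subtopology[OF assms(1)]])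
  then have "compactin X (?C \<inter> K)"
    using Hausdorff_imp_t1_space[OF assms(2)] assms(3) by (rule compactin_leaf_through_Int)
  moreover have "?C \<inter> K \<subseteq> Q"
  proof
    fix z
    assume z: "z \<in> ?C \<inter> K"
    show "z \<in> Q"
    proof (rule ccontr)
      assume "z \<notin> Q"
      with z have "p z \<in> p ` (K - Q)"
        by blast
      with z assms(9) show False
        using leaf_through_imp_eq[of z X p x] by simp
    qed
  qed
  then have "?C \<inter> K = ?C \<inter> Q"
    using assms(6) by blast
  ultimately have "compactin X (?C \<inter> Q)"
    by simp
  moreover have "x \<in> ?C"
    using openin_subset[OF assms(5)] assms(8) by (intro mem_leaf_through) blast
  ultimately show "?C \<subseteq> Q"
    using connectedin_subset_openin_if_compactin_Int[OF connectedin_leaf_through assms(7,5)] assms(8)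
    by blast
  with \<open>compactin X (?C \<inter> Q)\<close> show "compactin X ?C"
    by (simp add: inf.absorb1)
qed

lemma union_of_compact_leaves:
  assumes "U \<subseteq> topspace X" and "\<And>x. x \<in> U \<Longrightarrow> leaf_through X p x \<subseteq> U \<and> compactin X (leaf_through X p x)"
  shows "\<exists>\<L>. (\<forall>K \<in> \<L>. leaf_of X p K \<and> compactin X K) \<and> U = \<Union>\<L>"
proof (intro exI conjI)
  show "\<forall>K \<in> leaf_through X p ` U. leaf_of X p K \<and> compactin X K"
    using assms by (auto simp: leaf_of_iff_leaf_through)
  show "U = \<Union> (leaf_through X p ` U)"
    using assms mem_leaf_through by fastforce
qed

lemma core_union_of_compact_leaves:
  assumes cont: "continuous_map X Y p"
    and W: "openin Y W" "Hausdorff_space (subtopology Y W)"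
    and K: "compactin X K" "p ` K \<subseteq> W" and Q: "openin X Q" "Q \<subseteq> K"
    and leaves_Hausdorff: "\<And>x. x \<in> topspace X \<Longrightarrow> Hausdorff_space (subtopology X (leaf_through X p x))"
  defines "U \<equiv> {x \<in> Q. p x \<in> W - p ` (K - Q)}"
  shows "openin X U" and "\<exists>\<L>. (\<forall>C \<in> \<L>. leaf_of X p C \<and> compactin X C) \<and> U = \<Union>\<L>"
proof -
  have Q_topspace: "Q \<subseteq> topspace X"
    by (rule openin_subset[OF Q(1)])
  have "K - Q = K \<inter> (topspace X - Q)"
    using compactin_subset_topspace[OF K(1)] by blast
  then have "compactin X (K - Q)"
    using compact_Int_closedin[OF K(1) closedin_diff[OF closedin_topspace Q(1)]] by simp
  then have "openin Y (W - p ` (K - Q))"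
    using K(2) by (intro openin_diff_image_compactin[OF cont W]) auto
  then have "openin X (Q \<inter> {x \<in> topspace X. p x \<in> W - p ` (K - Q)})"
    by (rule openin_Int[OF Q(1) openin_continuous_map_preimage[OF cont]])
  moreover have "Q \<inter> {x \<in> topspace X. p x \<in> W - p ` (K - Q)} = U"
    using Q_topspace by (auto simp: U_def)
  ultimately show "openin X U"
    by simp
  have U_topspace: "U \<subseteq> topspace X"
    using Q_topspace by (auto simp: U_def)
  have "leaf_through X p x \<subseteq> U \<and> compactin X (leaf_through X p x)" if "x \<in> U" for x
  proof -
    have x: "x \<in> Q" "p x \<in> W" "p x \<notin> p ` (K - Q)"
      using that by (auto simp: U_def)
    have "Hausdorff_space (subtopology X (leaf_through X p x))"
      using Q_topspace x(1) by (intro leaves_Hausdorff) blast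
    note leaf = leaf_through_subset_and_compactin[OF cont W(2) K Q this x(1,3)]
    have "leaf_through X p x \<subseteq> U"
    proof
      fix z
      assume "z \<in> leaf_through X p x"
      then show "z \<in> U"
        using leaf(1) x(2,3) leaf_through_imp_eq[of z X p x] by (auto simp: U_def)
    qed
    then show ?thesis
      using leaf(2) by blast
  qed
  then show "\<exists>\<L>. (\<forall>C \<in> \<L>. leaf_of X p C \<and> compactin X C) \<and> U = \<Union>\<L>"
    by (rule union_of_compact_leaves[OF U_topspace])
qed

lemma core_nbhd_of_compact_openin_fiber:
  assumes "neighbourhood_base_of (compactin X) X" and "locally_Hausdorff_space Y"
    and cont: "continuous_map X Y p" and "compactin X L" and "y \<in> topspace Y"
    and G: "openin X G" "L = G \<inter> fiber_of X p y" and V: "openin X V" "L \<subseteq> V"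
  obtains W Q K where "openin Y W" "Hausdorff_space (subtopology Y W)"
    "compactin X K" "p ` K \<subseteq> W" "openin X Q" "Q \<subseteq> K" "K \<subseteq> V"
    "L \<subseteq> {x \<in> Q. p x \<in> W - p ` (K - Q)}"
proof -
  obtain W where W: "openin Y W" "y \<in> W" "Hausdorff_space (subtopology Y W)"
    using assms(2,5) unfolding locally_Hausdorff_space_def by blast
  define A where "A = V \<inter> G \<inter> {x \<in> topspace X. p x \<in> W}"
  have "openin X A"
    unfolding A_def by (rule openin_Int[OF openin_Int[OF V(1) G(1)] openin_continuous_map_preimage[OF cont W(1)]])
  moreover have "L \<subseteq> A"
    using G(2) V(2) W(2) by (auto simp: A_def fiber_of_def)
  ultimately obtain Q K where QK: "openin X Q" "compactin X K" "L \<subseteq> Q" "Q \<subseteq> K" "K \<subseteq> A"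
    by (rule neighbourhood_base_compactin_sandwich[OF assms(1,4)])
  have "y \<notin> p ` (K - Q)"
  proof
    assume "y \<in> p ` (K - Q)"
    then obtain z where "z \<in> K" "z \<notin> Q" "p z = y"
      by auto
    then have "z \<in> L"
      using QK(5) G(2) by (auto simp: A_def fiber_of_def)
    with \<open>z \<notin> Q\<close> QK(3) show False
      by blast
  qed
  then have "L \<subseteq> {x \<in> Q. p x \<in> W - p ` (K - Q)}"
    using QK(3) G(2) W(2) by (auto simp: fiber_of_def)
  moreover have "p ` K \<subseteq> W" "K \<subseteq> V"
    using QK(5) by (auto simp: A_def)
  ultimately show thesis
    using that W(1,3) QK(1,2,4) by blast
qed

theorem theorem3p3:
  fixes X :: "'a topology" and Y :: "'b topology" and p :: "'a \<Rightarrow> 'b"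
    and L V :: "'a set"
  assumes "neighbourhood_base_of (compactin X) X"
    and "locally_Hausdorff_space Y"
    and "continuous_map X Y p"
    and "\<And>K. leaf_of X p K \<Longrightarrow> Hausdorff_space (subtopology X K)"
    and "leaf_of X p L" and "compactin X L"
    and "\<forall>x \<in> L. openin (subtopology X (fiber_of X p (p x))) L"
    and "openin X V" and "L \<subseteq> V"
  shows "\<exists>U. openin X U \<and> L \<subseteq> U \<and> U \<subseteq> V \<and>
           (\<exists>\<L>. (\<forall>K \<in> \<L>. leaf_of X p K \<and> compactin X K) \<and> U = \<Union>\<L>)"
proof -
  obtain x0 where x0: "x0 \<in> topspace X" and L: "L = leaf_through X p x0"
    using assms(5) by (auto simp: leaf_of_iff_leaf_through)
  have "openin (subtopology X (fiber_of X p (p x0))) L"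
    using assms(7) mem_leaf_through[OF x0] L by blast
  then obtain G where G: "openin X G" "L = G \<inter> fiber_of X p (p x0)"
    by (auto simp: openin_subtopology)
  have "p x0 \<in> topspace Y"
    using continuous_map_image_subset_topspace[OF assms(3)] x0 by blast
  then obtain W Q K where WQK: "openin Y W" "Hausdorff_space (subtopology Y W)"
      "compactin X K" "p ` K \<subseteq> W" "openin X Q" "Q \<subseteq> K" "K \<subseteq> V"
      "L \<subseteq> {x \<in> Q. p x \<in> W - p ` (K - Q)}"
    by (rule core_nbhd_of_compact_openin_fiber[OF assms(1,2,3,6) _ G assms(8,9)])
  have "Hausdorff_space (subtopology X (leaf_through X p x))" if "x \<in> topspace X" for x
    using assms(4) that leaf_of_iff_leaf_through by blast
  note core = core_union_of_compact_leaves[OF assms(3) WQK(1-6) this]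
  have "{x \<in> Q. p x \<in> W - p ` (K - Q)} \<subseteq> V"
    using WQK(6,7) by blast
  then show ?thesis
    by (intro exI[of _ "{x \<in> Q. p x \<in> W - p ` (K - Q)}"] conjI core WQK(8))
qed

end
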